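(* Suppose that Assumptions (A1)–(A5) hold. If $(u,m)$ solves Problem 1, then $u,m\in C^{2,\frac12}(\mathbb{T})$.
   Context: Let $\mathbb{T}=\mathbb{R}/\mathbb{Z}$ be the one-dimensional torus; functions on $\mathbb{T}$ are identified with $1$-periodic functions on $\mathbb{R}$. $C^{2,\frac12}(\mathbb{T})$ denotes the functions of class $C^2$ on $\mathbb{T}$ whose second derivative is $\frac12$-Hölder continuous. Let $H:\mathbb{R}\to\mathbb{R}$ be of class $C^2$, $V:\mathbb{T}\to\mathbb{R}$ continuous, $\alpha>0$, and $0<\epsilon\le 1$. We say $(u,m)$ solves Problem 1 if $u,m\in C^2(\mathbb{T})$, $m>0$ on $\mathbb{T}$, and on $\mathbb{T}$: $$u-u_{xx}+H(u_x)+V(x)=m^\alpha+\epsilon(m-m_{xx}),\qquad m-m_{xx}-(H'(u_x)m)_x=1-\epsilon(u-u_{xx}).$$ Assumptions: (A1) there exist constants $C_1,C_2,C_3>0$ and $\gamma>1$ such that $-C_1+C_2|p|^\gamma\le H(p)\le C_1+C_3|p|^\gamma$ for all $p\in\mathbb{R}$. (A2) There exist constants $\tilde C_1,\tilde C_2,\tilde C_3>0$ such that $-\tilde C_1+\tilde C_2|p|^\gamma\le pH'(p)-H(p)\le \tilde C_1+\tilde C_3|p|^\gamma$ for all $p$ (same $\gamma$ as in (A1)). (A3) $V$ is of class $C^2$. (A4) $H$ is convex. (A5) $H$ is of class $C^4$. *)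

theory Defs
  imports "HOL-Analysis.Analysis"
begin

text \<open>Functions on the torus R/Z are identified with 1-periodic functions on R.\<close>

definition periodic1 :: "(real \<Rightarrow> real) \<Rightarrow> bool" where
  "periodic1 f \<longleftrightarrow> (\<forall>x. f (x + 1) = f x)"

definition C_k :: "nat \<Rightarrow> (real \<Rightarrow> real) \<Rightarrow> bool" where
  "C_k k f \<longleftrightarrow> (\<forall>j<k. \<forall>x. ((deriv ^^ j) f) differentiable (at x))
                 \<and> continuous_on UNIV ((deriv ^^ k) f)"

definition C2_torus :: "(real \<Rightarrow> real) \<Rightarrow> bool" where
  "C2_torus f \<longleftrightarrow> periodic1 f \<and> C_k 2 f"

definition holder_half :: "(real \<Rightarrow> real) \<Rightarrow> bool" where
  "holder_half g \<longleftrightarrow> (\<exists>C. \<forall>x y. \<bar>g x - g y\<bar> \<le> C * \<bar>x - y\<bar> powr (1/2))"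

definition C2_half_torus :: "(real \<Rightarrow> real) \<Rightarrow> bool" where
  "C2_half_torus f \<longleftrightarrow> C2_torus f \<and> holder_half (deriv (deriv f))"

definition solves_problem1 ::
  "(real \<Rightarrow> real) \<Rightarrow> (real \<Rightarrow> real) \<Rightarrow> real \<Rightarrow> real \<Rightarrow>
   (real \<Rightarrow> real) \<Rightarrow> (real \<Rightarrow> real) \<Rightarrow> bool" where
  "solves_problem1 H V \<alpha> \<epsilon> u m \<longleftrightarrow>
     C2_torus u \<and> C2_torus m \<and> (\<forall>x. m x > 0) \<and>
     (\<forall>x. u x - deriv (deriv u) x + H (deriv u x) + V x
            = m x powr \<alpha> + \<epsilon> * (m x - deriv (deriv m) x)) \<and>
     (\<forall>x. m x - deriv (deriv m) x - deriv (\<lambda>y. deriv H (deriv u y) * m y) x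
            = 1 - \<epsilon> * (u x - deriv (deriv u) x))"

end

theory Submission imports Defs begin

text \<open>Once the derivative of the flux \<open>H'(u') m\<close> is expanded, Problem 1 is, pointwise, a
  linear \<open>2 \<times> 2\<close> system for \<open>(u'', m'')\<close> whose determinant
  \<open>1 + \<epsilon> (\<epsilon> + H''(u') m)\<close> is positive by convexity of \<open>H\<close> and positivity of \<open>m\<close>.
  Solving it expresses \<open>u''\<close> and \<open>m''\<close> through \<open>u, u', m, m', V\<close> and \<open>H, H', H''\<close> evaluated
  at \<open>u'\<close>, all of which are periodic and continuously differentiable.  A periodic \<open>C\<^sup>1\<close>
  function is bounded and Lipschitz, hence \<open>1/2\<close>-Hoelder.  Only (A3)--(A5), \<open>m > 0\<close> and
  \<open>\<epsilon> > 0\<close> are needed.\<close>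

definition C1_periodic :: "(real \<Rightarrow> real) \<Rightarrow> bool" where
  "C1_periodic f \<longleftrightarrow> periodic1 f \<and>
     (\<exists>f'. continuous_on UNIV f' \<and> (\<forall>x. (f has_real_derivative f' x) (at x)))"

lemma periodic1_shift_nat: "periodic1 g \<Longrightarrow> g (y + real n) = g y"
proof (induction n)
  case (Suc n)
  then show ?case by (simp add: periodic1_def add.assoc[symmetric]) (metis add.assoc add.commute)
qed simp

lemma periodic1_shift_int:
  assumes "periodic1 g" shows "g (y + real_of_int k) = g y"
proof (cases "k \<ge> 0")
  case True then show ?thesis using periodic1_shift_nat[OF assms, of y "nat k"] by simp
next
  case False
  then show ?thesis using periodic1_shift_nat[OF assms, of "y + real_of_int k" "nat (-k)"] by simp
qed

lemma periodic1_frac: "periodic1 g \<Longrightarrow> g x = g (frac x)"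
  using periodic1_shift_int[of g "frac x" "\<lfloor>x\<rfloor>"] by (simp add: frac_def)

lemma periodic1_continuous_bounded:
  assumes "periodic1 g" "continuous_on UNIV g"
  shows "\<exists>M\<ge>0. \<forall>x. \<bar>g x\<bar> \<le> M"
proof -
  have "compact (g ` {0..1})"
    by (rule compact_continuous_image) (auto intro: continuous_on_subset[OF assms(2)])
  then obtain M where M: "\<forall>y\<in>g ` {0..1}. norm y \<le> M"
    using compact_imp_bounded bounded_iff by metis
  have "\<bar>g x\<bar> \<le> M" for x
  proof -
    have "frac x \<in> {0..1}" using frac_lt_1[of x] frac_ge_0[of x] by auto
    then show ?thesis using M periodic1_frac[OF assms(1), of x] by fastforce
  qed
  moreover have "M \<ge> 0" using M[rule_format, of "g 0"] by auto
  ultimately show ?thesis by blast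
qed

lemma periodic1_derivative:
  assumes "periodic1 f" "\<And>x. (f has_real_derivative f' x) (at x)"
  shows "periodic1 f'"
  unfolding periodic1_def
proof
  fix x
  have "((\<lambda>t. t + 1) has_real_derivative 1) (at x)"
    by (auto intro!: derivative_eq_intros)
  from DERIV_chain2[OF assms(2)[of "x + 1"] this]
  have "((\<lambda>t. f (t + 1)) has_real_derivative f' (x + 1)) (at x)" by simp
  moreover have "(\<lambda>t. f (t + 1)) = f" using assms(1) by (auto simp: periodic1_def)
  ultimately show "f' (x + 1) = f' x" using DERIV_unique assms(2) by metis
qed

lemma bounded_lipschitz_imp_holder_half:
  assumes lip: "B \<ge> 0" "\<And>x y. \<bar>f x - f y\<bar> \<le> B * \<bar>x - y\<bar>"
    and bnd: "M \<ge> 0" "\<And>x. \<bar>f x\<bar> \<le> M"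
  shows "holder_half f"
proof -
  have "\<bar>f x - f y\<bar> \<le> (B + 2 * M) * \<bar>x - y\<bar> powr (1/2)" for x y
  proof (cases "\<bar>x - y\<bar> \<le> 1")
    case True
    have "\<bar>x - y\<bar> \<le> \<bar>x - y\<bar> powr (1/2)"
    proof (cases "x = y")
      case False
      then have "\<bar>x - y\<bar> powr 1 \<le> \<bar>x - y\<bar> powr (1/2)"
        using True by (intro powr_mono') auto
      then show ?thesis using False by simp
    qed simp
    then have "B * \<bar>x - y\<bar> \<le> B * \<bar>x - y\<bar> powr (1/2)" using lip(1) by (simp add: mult_left_mono)
    moreover have "0 \<le> 2 * M * \<bar>x - y\<bar> powr (1/2)" using bnd(1) by simp
    ultimately show ?thesis using lip(2)[of x y] by (simp add: distrib_right)
  next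
    case False
    then have "1 \<le> \<bar>x - y\<bar> powr (1/2)" by (simp add: ge_one_powr_ge_zero)
    then have "2 * M \<le> 2 * M * \<bar>x - y\<bar> powr (1/2)"
      using bnd(1) by (simp add: mult_le_cancel_left1)
    moreover have "0 \<le> B * \<bar>x - y\<bar> powr (1/2)" using lip(1) by simp
    moreover have "\<bar>f x - f y\<bar> \<le> 2 * M" using bnd(2)[of x] bnd(2)[of y] by linarith
    ultimately show ?thesis by (simp add: distrib_right)
  qed
  then show ?thesis unfolding holder_half_def by blast
qed

lemma C1_periodic_continuous: "C1_periodic f \<Longrightarrow> continuous_on UNIV f"
  unfolding C1_periodic_def by (meson DERIV_isCont continuous_at_imp_continuous_on)

lemma C1_periodic_lipschitz:
  assumes "C1_periodic f"
  shows "\<exists>B\<ge>0. \<forall>x y. \<bar>f x - f y\<bar> \<le> B * \<bar>x - y\<bar>"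
proof -
  obtain f' where c: "continuous_on UNIV f'" and d: "\<And>x. (f has_real_derivative f' x) (at x)"
    and p: "periodic1 f" using assms unfolding C1_periodic_def by blast
  obtain B where B: "B \<ge> 0" "\<And>x. \<bar>f' x\<bar> \<le> B"
    using periodic1_continuous_bounded[OF periodic1_derivative[OF p d] c] by blast
  have *: "\<bar>f x - f y\<bar> \<le> B * \<bar>x - y\<bar>" if "y < x" for x y
  proof -
    obtain z where "f x - f y = (x - y) * f' z" using MVT2[OF \<open>y < x\<close>, of f f'] d by metis
    then have "\<bar>f x - f y\<bar> = \<bar>x - y\<bar> * \<bar>f' z\<bar>" by (simp add: abs_mult)
    also have "\<dots> \<le> \<bar>x - y\<bar> * B" by (rule mult_left_mono) (use B in auto)
    finally show ?thesis by (simp add: mult.commute)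
  qed
  have "\<bar>f x - f y\<bar> \<le> B * \<bar>x - y\<bar>" for x y
    using *[of x y] *[of y x] by (cases x y rule: linorder_cases) (auto simp: abs_minus_commute)
  then show ?thesis using B by blast
qed

lemma C1_periodic_imp_holder_half:
  assumes "C1_periodic f" shows "holder_half f"
proof -
  obtain B where "B \<ge> 0" "\<And>x y. \<bar>f x - f y\<bar> \<le> B * \<bar>x - y\<bar>"
    using C1_periodic_lipschitz[OF assms] by blast
  moreover obtain M where "M \<ge> 0" "\<And>x. \<bar>f x\<bar> \<le> M"
    using periodic1_continuous_bounded C1_periodic_continuous[OF assms] assms
    unfolding C1_periodic_def by blast
  ultimately show ?thesis by (rule bounded_lipschitz_imp_holder_half)
qed

lemma C1_periodic_const: "C1_periodic (\<lambda>x. c)"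
  unfolding C1_periodic_def periodic1_def by (auto intro!: exI[of _ "\<lambda>x. 0"])

lemma C1_periodic_add:
  assumes f: "C1_periodic f" and g: "C1_periodic g"
  shows "C1_periodic (\<lambda>x. f x + g x)"
proof -
  obtain f' g' where "periodic1 f" "periodic1 g" "continuous_on UNIV f'" "continuous_on UNIV g'"
    "\<And>x. (f has_real_derivative f' x) (at x)" "\<And>x. (g has_real_derivative g' x) (at x)"
    using f g unfolding C1_periodic_def by blast
  then show ?thesis
    unfolding C1_periodic_def periodic1_def
    by (auto intro!: exI[of _ "\<lambda>x. f' x + g' x"] continuous_intros DERIV_add)
qed

lemma C1_periodic_diff:
  assumes f: "C1_periodic f" and g: "C1_periodic g"
  shows "C1_periodic (\<lambda>x. f x - g x)"
proof -
  obtain f' g' where "periodic1 f" "periodic1 g" "continuous_on UNIV f'" "continuous_on UNIV g'"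
    "\<And>x. (f has_real_derivative f' x) (at x)" "\<And>x. (g has_real_derivative g' x) (at x)"
    using f g unfolding C1_periodic_def by blast
  then show ?thesis
    unfolding C1_periodic_def periodic1_def
    by (auto intro!: exI[of _ "\<lambda>x. f' x - g' x"] continuous_intros DERIV_diff)
qed

lemma C1_periodic_mult:
  assumes f: "C1_periodic f" and g: "C1_periodic g"
  shows "C1_periodic (\<lambda>x. f x * g x)"
proof -
  obtain f' g' where "periodic1 f" "periodic1 g" "continuous_on UNIV f'" "continuous_on UNIV g'"
    "\<And>x. (f has_real_derivative f' x) (at x)" "\<And>x. (g has_real_derivative g' x) (at x)"
    using f g unfolding C1_periodic_def by blast
  with C1_periodic_continuous[OF f] C1_periodic_continuous[OF g] show ?thesis
    unfolding C1_periodic_def periodic1_def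
    by (auto intro!: exI[of _ "\<lambda>x. f' x * g x + g' x * f x"] continuous_intros DERIV_mult)
qed

lemma C1_periodic_divide:
  assumes f: "C1_periodic f" and g: "C1_periodic g" and nz: "\<And>x. g x \<noteq> 0"
  shows "C1_periodic (\<lambda>x. f x / g x)"
proof -
  obtain f' g' where "periodic1 f" "periodic1 g" "continuous_on UNIV f'" "continuous_on UNIV g'"
    "\<And>x. (f has_real_derivative f' x) (at x)" "\<And>x. (g has_real_derivative g' x) (at x)"
    using f g unfolding C1_periodic_def by blast
  with C1_periodic_continuous[OF f] C1_periodic_continuous[OF g] nz show ?thesis
    unfolding C1_periodic_def periodic1_def
    by (auto intro!: exI[of _ "\<lambda>x. (f' x * g x - f x * g' x) / (g x * g x)"]
        continuous_intros DERIV_divide)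
qed

lemma C1_periodic_compose:
  assumes f: "C1_periodic f"
    and h: "\<And>y. (h has_real_derivative h' y) (at y)" "continuous_on UNIV h'"
  shows "C1_periodic (\<lambda>x. h (f x))"
proof -
  obtain f' where "periodic1 f" "continuous_on UNIV f'" "\<And>x. (f has_real_derivative f' x) (at x)"
    using f unfolding C1_periodic_def by blast
  moreover have "continuous_on UNIV (\<lambda>x. h' (f x))"
    using continuous_on_compose[OF C1_periodic_continuous[OF f], of h'] h(2)
      continuous_on_subset by (auto simp: o_def)
  ultimately show ?thesis
    unfolding C1_periodic_def periodic1_def
    by (auto intro!: exI[of _ "\<lambda>x. h' (f x) * f' x"] continuous_intros DERIV_chain2[OF h(1)])
qed

lemma C1_periodic_powr:
  assumes f: "C1_periodic f" and pos: "\<And>x. f x > 0"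
  shows "C1_periodic (\<lambda>x. f x powr a)"
proof -
  obtain f' where "periodic1 f" "continuous_on UNIV f'" "\<And>x. (f has_real_derivative f' x) (at x)"
    using f unfolding C1_periodic_def by blast
  with C1_periodic_continuous[OF f] pos show ?thesis
    unfolding C1_periodic_def periodic1_def
    by (auto intro!: exI[of _ "\<lambda>x. a * f x powr (a - of_nat 1) * f' x"] continuous_intros
        DERIV_fun_powr simp: less_imp_neq[symmetric])
qed

lemma C_k_has_derivative:
  assumes "C_k k f" "j < k"
  shows "((deriv ^^ j) f has_real_derivative (deriv ^^ Suc j) f x) (at x)"
  using assms DERIV_deriv_iff_real_differentiable unfolding C_k_def by simp

lemma C_k_continuous:
  assumes "C_k k f" "j \<le> k"
  shows "continuous_on UNIV ((deriv ^^ j) f)"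
proof (cases "j = k")
  case False
  then show ?thesis
    using assms C_k_has_derivative[of k f j]
    by (meson DERIV_isCont continuous_at_imp_continuous_on le_neq_implies_less)
qed (use assms in \<open>simp add: C_k_def\<close>)

lemma C_k_mono:
  assumes "C_k k f" "j \<le> k"
  shows "C_k j f"
  using assms C_k_continuous[OF assms(1)] unfolding C_k_def by simp

lemma C_k_C1_periodic:
  assumes "C_k 2 f" "periodic1 f"
  shows "C1_periodic f" "C1_periodic (deriv f)"
proof -
  have d0: "(f has_real_derivative deriv f x) (at x)"
    and d1: "(deriv f has_real_derivative deriv (deriv f) x) (at x)" for x
    using C_k_has_derivative[OF assms(1), of 0 x] C_k_has_derivative[OF assms(1), of 1 x] by simp_all
  have c1: "continuous_on UNIV (deriv f)" and c2: "continuous_on UNIV (deriv (deriv f))"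
    using C_k_continuous[OF assms(1), of 1] C_k_continuous[OF assms(1), of 2]
    by (simp_all add: numeral_2_eq_2)
  show "C1_periodic f" unfolding C1_periodic_def using assms(2) d0 c1 by blast
  show "C1_periodic (deriv f)"
    unfolding C1_periodic_def using periodic1_derivative[OF assms(2) d0] d1 c2 by blast
qed

lemma convex_second_derivative_nonneg:
  fixes H :: "real \<Rightarrow> real"
  assumes cv: "convex_on UNIV H" and d: "\<And>x. (H has_real_derivative H' x) (at x)"
    and d2: "(H' has_real_derivative D) (at x)"
  shows "D \<ge> 0"
proof -
  have tangent: "H y - H c \<ge> H' c * (y - c)" for y c
    by (rule convex_on_imp_above_tangent[OF cv]) (use d in auto)
  have "mono_on UNIV H'"
  proof (rule mono_onI)
    fix a b :: real assume "a \<le> b"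
    have "(H' b - H' a) * (b - a) \<ge> 0"
      using tangent[of b a] tangent[of a b] by (simp add: algebra_simps)
    then show "H' a \<le> H' b" using \<open>a \<le> b\<close>
      by (cases "a = b") (auto simp: zero_le_mult_iff)
  qed
  then show ?thesis using mono_on_imp_deriv_nonneg[OF _ d2] by auto
qed

lemma C_k_compose_C1_periodic:
  assumes "C_k (Suc k) h" "j \<le> k" "C1_periodic g"
  shows "C1_periodic (\<lambda>x. (deriv ^^ j) h (g x))"
proof (rule C1_periodic_compose[OF assms(3)])
  show "((deriv ^^ j) h has_real_derivative (deriv ^^ Suc j) h y) (at y)" for y
    using C_k_has_derivative[OF assms(1)] assms(2) by simp
  show "continuous_on UNIV ((deriv ^^ Suc j) h)"
    using C_k_continuous[OF assms(1), of "Suc j"] assms(2) by simp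
qed

lemma problem1_linear_system:
  fixes H V u m :: "real \<Rightarrow> real" and \<alpha> \<epsilon> :: real
  assumes H: "C_k 2 H" and sol: "solves_problem1 H V \<alpha> \<epsilon> u m"
  shows "deriv (deriv u) x - \<epsilon> * deriv (deriv m) x
      = u x + H (deriv u x) + V x - m x powr \<alpha> - \<epsilon> * m x"
    and "deriv (deriv m) x + (\<epsilon> + deriv (deriv H) (deriv u x) * m x) * deriv (deriv u) x
      = m x - 1 + \<epsilon> * u x - deriv H (deriv u x) * deriv m x"
proof -
  have u: "C_k 2 u" and m: "C_k 2 m"
    using sol unfolding solves_problem1_def C2_torus_def by auto
  have "((\<lambda>y. deriv H (deriv u y)) has_real_derivative
      deriv (deriv H) (deriv u x) * deriv (deriv u) x) (at x)"
    using DERIV_chain2[OF C_k_has_derivative[OF H, of 1] C_k_has_derivative[OF u, of 1 x]] by simp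
  from DERIV_mult[OF this C_k_has_derivative[OF m, of 0 x]]
  have "deriv (\<lambda>y. deriv H (deriv u y) * m y) x
      = deriv (deriv H) (deriv u x) * deriv (deriv u) x * m x + deriv H (deriv u x) * deriv m x"
    by (intro DERIV_imp_deriv) (simp add: algebra_simps)
  with sol show "deriv (deriv u) x - \<epsilon> * deriv (deriv m) x
      = u x + H (deriv u x) + V x - m x powr \<alpha> - \<epsilon> * m x"
    and "deriv (deriv m) x + (\<epsilon> + deriv (deriv H) (deriv u x) * m x) * deriv (deriv u) x
      = m x - 1 + \<epsilon> * u x - deriv H (deriv u x) * deriv m x"
    unfolding solves_problem1_def by (auto simp: algebra_simps)
qed

lemma problem1_second_derivatives_C1:
  fixes H V u m :: "real \<Rightarrow> real" and \<alpha> \<epsilon> :: real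
  assumes H: "C_k 4 H" "convex_on UNIV H" and V: "C_k 2 V" "periodic1 V" and "\<epsilon> > 0"
    and sol: "solves_problem1 H V \<alpha> \<epsilon> u m"
  shows "C1_periodic (deriv (deriv u)) \<and> C1_periodic (deriv (deriv m))"
proof -
  have u: "C_k 2 u" "periodic1 u" and m: "C_k 2 m" "periodic1 m" and m_pos: "\<And>x. m x > 0"
    using sol unfolding solves_problem1_def C2_torus_def by auto
  have dH: "(H has_real_derivative deriv H y) (at y)"
    "(deriv H has_real_derivative deriv (deriv H) y) (at y)" for y
    using C_k_has_derivative[OF H(1), of 0 y] C_k_has_derivative[OF H(1), of 1 y] by simp_all
  define A where "A x = u x + H (deriv u x) + V x - m x powr \<alpha> - \<epsilon> * m x" for x
  define c where "c x = \<epsilon> + deriv (deriv H) (deriv u x) * m x" for x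
  define B where "B x = m x - 1 + \<epsilon> * u x - deriv H (deriv u x) * deriv m x" for x
  define G where "G x = (B x - c x * A x) / (1 + \<epsilon> * c x)" for x
  note lin = problem1_linear_system[OF C_k_mono[OF H(1)] sol, folded A_def B_def c_def]
  have det_pos: "1 + \<epsilon> * c x > 0" for x
    using convex_second_derivative_nonneg[OF H(2) dH] m_pos[of x] \<open>\<epsilon> > 0\<close>
    unfolding c_def by (simp add: add_pos_nonneg)
  have m2: "deriv (deriv m) = G"
  proof
    fix x
    have "deriv (deriv m) x * (1 + \<epsilon> * c x) = B x - c x * A x"
      using lin[of x] by (simp add: algebra_simps)
    then show "deriv (deriv m) x = G x" unfolding G_def using det_pos[of x] by (simp add: field_simps)
  qed
  have u2: "deriv (deriv u) = (\<lambda>x. A x + \<epsilon> * G x)"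
    using lin(1) m2 by (auto simp: algebra_simps)
  note u_C1 = C_k_C1_periodic[OF u] and m_C1 = C_k_C1_periodic[OF m]
    and V_C1 = C_k_C1_periodic(1)[OF V]
  have "C1_periodic (\<lambda>x. (deriv ^^ j) H (deriv u x))" if "j \<le> 3" for j
    using C_k_compose_C1_periodic[of 3 H, OF _ that u_C1(2)] H(1) by (simp add: numeral_eq_Suc)
  from this[of 0] this[of 1] this[of 2]
  have H_u': "C1_periodic (\<lambda>x. H (deriv u x))" "C1_periodic (\<lambda>x. deriv H (deriv u x))"
    "C1_periodic (\<lambda>x. deriv (deriv H) (deriv u x))"
    by (simp_all add: numeral_2_eq_2)
  have "C1_periodic A" "C1_periodic B" "C1_periodic c"
    unfolding A_def B_def c_def
    by (intro C1_periodic_diff C1_periodic_add C1_periodic_mult C1_periodic_powr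
        C1_periodic_const H_u' u_C1 m_C1 V_C1 m_pos)+
  then have "C1_periodic G"
    unfolding G_def using det_pos
    by (intro C1_periodic_divide C1_periodic_diff C1_periodic_mult C1_periodic_add
        C1_periodic_const) (auto simp: less_imp_neq[symmetric])
  moreover have "C1_periodic (\<lambda>x. A x + \<epsilon> * G x)"
    using C1_periodic_add[OF \<open>C1_periodic A\<close> C1_periodic_mult[OF C1_periodic_const]] calculation .
  ultimately show ?thesis unfolding u2 m2 by blast
qed

theorem mainTheorem7:
  fixes H V u m :: "real \<Rightarrow> real" and \<alpha> \<epsilon> :: real
  assumes H_C2: "C_k 2 H"
    and V_cont: "continuous_on UNIV V" and V_per: "periodic1 V"
    and alpha_pos: "\<alpha> > 0" and eps: "0 < \<epsilon>" "\<epsilon> \<le> 1"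
    and A1_A2: "\<exists>\<gamma>>1.
        (\<exists>C1 C2 C3. C1 > 0 \<and> C2 > 0 \<and> C3 > 0 \<and>
           (\<forall>p. - C1 + C2 * \<bar>p\<bar> powr \<gamma> \<le> H p \<and> H p \<le> C1 + C3 * \<bar>p\<bar> powr \<gamma>)) \<and>
        (\<exists>D1 D2 D3. D1 > 0 \<and> D2 > 0 \<and> D3 > 0 \<and>
           (\<forall>p. - D1 + D2 * \<bar>p\<bar> powr \<gamma> \<le> p * deriv H p - H p \<and>
                p * deriv H p - H p \<le> D1 + D3 * \<bar>p\<bar> powr \<gamma>))"
    and A3: "C_k 2 V"
    and A4: "convex_on UNIV H"
    and A5: "C_k 4 H"
    and sol: "solves_problem1 H V \<alpha> \<epsilon> u m"
  shows "C2_half_torus u \<and> C2_half_torus m"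
proof -
  have "C1_periodic (deriv (deriv u)) \<and> C1_periodic (deriv (deriv m))"
    using problem1_second_derivatives_C1[OF A5 A4 A3 V_per eps(1) sol] .
  then have "holder_half (deriv (deriv u))" "holder_half (deriv (deriv m))"
    using C1_periodic_imp_holder_half by blast+
  moreover have "C2_torus u" "C2_torus m" using sol unfolding solves_problem1_def by auto
  ultimately show ?thesis unfolding C2_half_torus_def by blast
qed

end
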